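(* Let $c$ be a cost function, $\alpha_i>0$, $m_i$ measures on $\mathbb{R}^n$, and let $(\Phi_1,\dots,\Phi_N)$ be an admissible tuple maximizing $\mathcal{BS}_{\alpha,m}$ over all admissible tuples, with $0<\int e^{-\alpha_i\Phi_i}dm_i<\infty$. Let $\mu_i=e^{-\alpha_i\Phi_i}m_i/\int e^{-\alpha_i\Phi_i}dm_i$ and $d(x)=\sum_{i=1}^N\Phi_i(x_i)-c(x)\ge0$. Let $\nu_1,\dots,\nu_N$ be probability measures on $\mathbb{R}^n$ such that the minimization transportation problem for the cost $d$ with marginals $\nu_i$ and its dual problem both admit solutions and their optimal values coincide. Then $$K^{\min}_d(\nu_1,\dots,\nu_N)\le\sum_{i=1}^N\frac{1}{\alpha_i}\,\mathrm{Ent}_{\mu_i}(\nu_i).$$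
   Context: Points of $(\mathbb{R}^n)^N$ are written $x=(x_1,\dots,x_N)$. A tuple $(V_i)$ of functions $V_i:\mathbb{R}^n\to(-\infty,+\infty]$ is admissible (for $c$) if $\sum_iV_i(x_i)\ge c(x)$ for all $x$; $\mathcal{BS}_{\alpha,m}(V_1,\dots,V_N)=\prod_i(\int e^{-\alpha_iV_i}dm_i)^{1/\alpha_i}$. $K^{\min}_d(\nu_1,\dots,\nu_N)=\inf_\pi\int d\,d\pi$ over probability measures $\pi$ on $(\mathbb{R}^n)^N$ with marginals $\nu_1,\dots,\nu_N$; its dual problem is to maximize $\sum_i\int f_i\,d\nu_i$ over tuples $f_i\in L^1(\nu_i)$ with $\sum_if_i(x_i)\le d(x)$ for all $x$. $\mathrm{Ent}_\mu(\nu)=\int\rho\log\rho\,d\mu$ if $\nu=\rho\mu$, and $+\infty$ if $\nu$ is not absolutely continuous w.r.t. $\mu$. *)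

theory Defs
  imports "HOL-Probability.Probability"
begin

text \<open>Points of (R^n)^N are functions x :: 'i \<Rightarrow> 'a, where 'i is a finite index type
  with N = CARD('i) elements and 'a is an abstract Euclidean space R^n.
  Potentials V_i take values in (-\<infinity>,+\<infinity>] (ereal, never -\<infinity>).\<close>

definition expneg :: "real \<Rightarrow> ereal \<Rightarrow> ennreal" where
  "expneg \<alpha> v = (case v of ereal r \<Rightarrow> ennreal (exp (- \<alpha> * r)) | PInfty \<Rightarrow> 0 | MInfty \<Rightarrow> \<infinity>)"

definition admissible :: "(('i::finite \<Rightarrow> 'a) \<Rightarrow> real) \<Rightarrow> ('i \<Rightarrow> 'a \<Rightarrow> ereal) \<Rightarrow> bool" where
  "admissible c V \<longleftrightarrow> (\<forall>i y. V i y \<noteq> -\<infinity>) \<and> (\<forall>x. (\<Sum>i\<in>UNIV. V i (x i)) \<ge> ereal (c x))"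

definition ennpow :: "ennreal \<Rightarrow> real \<Rightarrow> ennreal" where
  "ennpow I p = (if I = \<infinity> then \<infinity> else ennreal (enn2real I powr p))"

definition BS :: "('i::finite \<Rightarrow> real) \<Rightarrow> ('i \<Rightarrow> 'a measure) \<Rightarrow> ('i \<Rightarrow> 'a \<Rightarrow> ereal) \<Rightarrow> ennreal" where
  "BS \<alpha> m V = (\<Prod>i\<in>UNIV. ennpow (\<integral>\<^sup>+ y. expneg (\<alpha> i) (V i y) \<partial>(m i)) (1 / \<alpha> i))"

definition couplings :: "('i::finite \<Rightarrow> 'a::euclidean_space measure) \<Rightarrow> ('i \<Rightarrow> 'a) measure set" where
  "couplings \<nu> = {\<pi>. prob_space \<pi> \<and> sets \<pi> = sets (PiM UNIV (\<lambda>_. borel)) \<and>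
                    (\<forall>i. distr \<pi> borel (\<lambda>x. x i) = \<nu> i)}"

definition Kmin :: "(('i::finite \<Rightarrow> 'a::euclidean_space) \<Rightarrow> ereal) \<Rightarrow> ('i \<Rightarrow> 'a measure) \<Rightarrow> ennreal" where
  "Kmin d \<nu> = (INF \<pi>\<in>couplings \<nu>. \<integral>\<^sup>+ x. e2ennreal (d x) \<partial>\<pi>)"

definition dual_feasible :: "(('i::finite \<Rightarrow> 'a::euclidean_space) \<Rightarrow> ereal) \<Rightarrow> ('i \<Rightarrow> 'a measure) \<Rightarrow> ('i \<Rightarrow> 'a \<Rightarrow> real) \<Rightarrow> bool" where
  "dual_feasible d \<nu> f \<longleftrightarrow> (\<forall>i. integrable (\<nu> i) (f i)) \<and>
     (\<forall>x. ereal (\<Sum>i\<in>UNIV. f i (x i)) \<le> d x)"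

definition dual_value :: "('i::finite \<Rightarrow> 'a measure) \<Rightarrow> ('i \<Rightarrow> 'a \<Rightarrow> real) \<Rightarrow> real" where
  "dual_value \<nu> f = (\<Sum>i\<in>UNIV. \<integral>y. f i y \<partial>(\<nu> i))"

definition xlogx :: "real \<Rightarrow> real" where
  "xlogx t = (if t \<le> 0 then 0 else t * ln t)"

text \<open>Relative entropy Ent_\<mu>(\<nu>) = \<integral> \<rho> log \<rho> d\<mu> if \<nu> = \<rho>\<mu>, +\<infinity> otherwise
  (the integral taken in the extended sense: positive part minus negative part).\<close>
definition Ent :: "'a measure \<Rightarrow> 'a measure \<Rightarrow> ereal" where
  "Ent \<mu> \<nu> =
    (if absolutely_continuous \<mu> \<nu> \<and> sets \<nu> = sets \<mu> then
       (let \<rho> = (\<lambda>x. enn2real (RN_deriv \<mu> \<nu> x)) in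
         enn2ereal (\<integral>\<^sup>+ x. ennreal (xlogx (\<rho> x)) \<partial>\<mu>)
         - enn2ereal (\<integral>\<^sup>+ x. ennreal (- xlogx (\<rho> x)) \<partial>\<mu>))
     else \<infinity>)"

end

theory Submission
  imports Defs
begin

text \<open>
  Take a dual solution f, so that K = sum_i int f_i d nu_i. Since sum_i f_i(x_i) <= d(x), the
  shifted potentials V_i = Phi_i - f_i are again admissible, and maximality of Phi gives
  prod_i W_i^(1/alpha_i) <= prod_i Z_i^(1/alpha_i) for the partition functions
  Z_i = int exp(-alpha_i Phi_i) dm_i and W_i = int exp(-alpha_i V_i) dm_i, i.e.
  sum_i log(W_i/Z_i)/alpha_i <= 0. On the other hand W_i/Z_i = int exp(alpha_i f_i) d mu_i, so the
  Gibbs variational inequality int g d nu <= Ent_mu(nu) + log int exp g d mu (Young's inequality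
  t b <= t log t - t + exp b integrated against the density of nu) yields
  alpha_i int f_i d nu_i <= Ent_mu_i(nu_i) + log(W_i/Z_i). Summing over i gives the claim; only
  dual attainment and the absence of a duality gap are used.
\<close>

lemma borel_measurable_expneg [measurable]: "expneg a \<in> borel_measurable borel"
proof -
  have "expneg a = (\<lambda>v. if v = \<infinity> then 0 else if v = -\<infinity> then \<infinity>
                        else ennreal (exp (- a * real_of_ereal v)))"
    by (rule ext) (simp add: expneg_def split: ereal.split)
  then show ?thesis by simp
qed

lemma expneg_minus_ereal:
  assumes "v \<noteq> -\<infinity>"
  shows "expneg a (v - ereal t) = expneg a v * ennreal (exp (a * t))"
  using assms
  by (cases v) (auto simp: expneg_def ennreal_mult[symmetric] exp_add[symmetric] algebra_simps)

lemma nn_integral_expneg_minus_pos: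
  assumes [measurable]: "\<Phi> \<in> borel_measurable m" "f \<in> borel_measurable m"
    and \<Phi>_fin: "\<And>y. \<Phi> y \<noteq> -\<infinity>" and Z_pos: "0 < (\<integral>\<^sup>+y. expneg \<alpha> (\<Phi> y) \<partial>m)"
  shows "0 < (\<integral>\<^sup>+y. expneg \<alpha> (\<Phi> y - ereal (f y)) \<partial>m)"
proof (rule ccontr)
  assume "\<not> ?thesis"
  then have "AE y in m. expneg \<alpha> (\<Phi> y - ereal (f y)) = 0"
    by (simp add: nn_integral_0_iff_AE)
  then have "AE y in m. expneg \<alpha> (\<Phi> y) = 0"
    by eventually_elim (simp add: expneg_minus_ereal[OF \<Phi>_fin])
  then have "(\<integral>\<^sup>+y. expneg \<alpha> (\<Phi> y) \<partial>m) = 0"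
    by (simp add: nn_integral_0_iff_AE)
  with Z_pos show False
    by simp
qed

lemma borel_measurable_xlogx [measurable]: "xlogx \<in> borel_measurable borel"
  unfolding xlogx_def[abs_def] by measurable

lemma mult_le_xlogx_minus_plus_exp:
  assumes "0 \<le> t"
  shows "t * b \<le> xlogx t - t + exp b"
proof (cases "t = 0")
  case False
  with assms have t: "t > 0" by simp
  have "1 + (b - ln t) \<le> exp (b - ln t)"
    by (rule exp_ge_add_one_self)
  also have "\<dots> = exp b / t"
    using t by (simp add: exp_diff)
  finally have "t * (1 + (b - ln t)) \<le> exp b"
    using t by (simp add: field_simps)
  then show ?thesis
    using t by (simp add: xlogx_def algebra_simps)
qed (simp add: xlogx_def)

lemma xlogx_ge_minus_one: "-1 \<le> xlogx t"
proof (cases "t \<le> 0")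
  case False
  then show ?thesis
    using mult_le_xlogx_minus_plus_exp[of t 0] by simp
qed (simp add: xlogx_def)

lemma enn2ereal_nn_integral_diff_eq:
  fixes h :: "'a \<Rightarrow> real"
  assumes "finite_measure M" "h \<in> borel_measurable M" "\<And>x. b \<le> h x"
  shows "enn2ereal (\<integral>\<^sup>+x. ennreal (h x) \<partial>M) - enn2ereal (\<integral>\<^sup>+x. ennreal (- h x) \<partial>M)
           = (if integrable M h then ereal (integral\<^sup>L M h) else \<infinity>)"
proof -
  interpret finite_measure M by fact
  have "(\<integral>\<^sup>+x. ennreal (- h x) \<partial>M) \<le> (\<integral>\<^sup>+x. ennreal (- b) \<partial>M)"
    using assms(3) by (intro nn_integral_mono) (simp add: ennreal_leI)
  also have "\<dots> < \<infinity>"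
    by (simp add: ennreal_mult_less_top less_top[symmetric] ennreal_mult_eq_top_iff)
  finally have neg: "(\<integral>\<^sup>+x. ennreal (- h x) \<partial>M) \<noteq> \<infinity>"
    by simp
  show ?thesis
  proof (cases "integrable M h")
    case True
    then have "(\<integral>\<^sup>+x. ennreal (h x) \<partial>M) \<noteq> \<infinity>"
      by (simp add: real_integrable_def)
    then show ?thesis
      using neg True unfolding real_lebesgue_integral_def[OF True]
      by (cases "(\<integral>\<^sup>+x. ennreal (h x) \<partial>M)" rule: ennreal_cases;
          cases "(\<integral>\<^sup>+x. ennreal (- h x) \<partial>M)" rule: ennreal_cases) auto
  next
    case False
    then have "(\<integral>\<^sup>+x. ennreal (h x) \<partial>M) = \<infinity>"
      using neg assms(2) by (simp add: real_integrable_def)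
    then show ?thesis
      using neg False by (cases "(\<integral>\<^sup>+x. ennreal (- h x) \<partial>M)" rule: ennreal_cases) auto
  qed
qed

lemma Ent_absolutely_continuous:
  assumes "finite_measure \<mu>" "absolutely_continuous \<mu> \<nu>" "sets \<nu> = sets \<mu>"
  defines "\<rho> \<equiv> \<lambda>x. enn2real (RN_deriv \<mu> \<nu> x)"
  shows "Ent \<mu> \<nu> = (if integrable \<mu> (\<lambda>x. xlogx (\<rho> x)) then ereal (\<integral>x. xlogx (\<rho> x) \<partial>\<mu>) else \<infinity>)"
  using enn2ereal_nn_integral_diff_eq[OF assms(1), of "\<lambda>x. xlogx (\<rho> x)" "-1"] assms
  by (simp add: Ent_def Let_def xlogx_ge_minus_one)

lemma density_real_RN_deriv:
  assumes "sigma_finite_measure \<mu>" "sigma_finite_measure \<nu>"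
    and "absolutely_continuous \<mu> \<nu>" "sets \<nu> = sets \<mu>"
  shows "density \<mu> (\<lambda>x. ennreal (enn2real (RN_deriv \<mu> \<nu> x))) = \<nu>"
proof -
  have "AE x in \<mu>. RN_deriv \<mu> \<nu> x \<noteq> \<infinity>"
    using assms by (rule sigma_finite_measure.RN_deriv_finite)
  then have "density \<mu> (\<lambda>x. ennreal (enn2real (RN_deriv \<mu> \<nu> x))) = density \<mu> (RN_deriv \<mu> \<nu>)"
    by (intro density_cong) (auto simp: less_top)
  also have "\<dots> = \<nu>"
    using assms by (intro sigma_finite_measure.density_RN_deriv)
  finally show ?thesis .
qed

lemma integral_mult_le_integral_xlogx:
  fixes \<rho> h :: "'a \<Rightarrow> real"
  assumes "\<And>x. 0 \<le> \<rho> x" "integrable M \<rho>" "integrable M (\<lambda>x. xlogx (\<rho> x))"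
    and "integrable M (\<lambda>x. exp (h x))" "integrable M (\<lambda>x. \<rho> x * h x)"
  shows "(\<integral>x. \<rho> x * h x \<partial>M) \<le> (\<integral>x. xlogx (\<rho> x) \<partial>M) - (\<integral>x. \<rho> x \<partial>M) + (\<integral>x. exp (h x) \<partial>M)"
proof -
  have "(\<integral>x. \<rho> x * h x \<partial>M) \<le> (\<integral>x. xlogx (\<rho> x) - \<rho> x + exp (h x) \<partial>M)"
    using assms by (intro integral_mono mult_le_xlogx_minus_plus_exp) auto
  also have "\<dots> = (\<integral>x. xlogx (\<rho> x) \<partial>M) - (\<integral>x. \<rho> x \<partial>M) + (\<integral>x. exp (h x) \<partial>M)"
    using assms by simp
  finally show ?thesis .
qed

lemma integral_le_Ent_if_nn_integral_exp_eq_1: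
  fixes g :: "'a \<Rightarrow> real"
  assumes "prob_space \<mu>" "prob_space \<nu>" "sets \<nu> = sets \<mu>"
    and [measurable]: "g \<in> borel_measurable \<mu>" and g_int: "integrable \<nu> g"
    and exp_g: "(\<integral>\<^sup>+x. ennreal (exp (g x)) \<partial>\<mu>) = 1"
  shows "ereal (\<integral>x. g x \<partial>\<nu>) \<le> Ent \<mu> \<nu>"
proof (cases "absolutely_continuous \<mu> \<nu>")
  case False
  then show ?thesis by (simp add: Ent_def)
next
  case ac: True
  interpret \<mu>: prob_space \<mu> by fact
  interpret \<nu>: prob_space \<nu> by fact
  define \<rho> where "\<rho> x = enn2real (RN_deriv \<mu> \<nu> x)" for x
  have [measurable]: "\<rho> \<in> borel_measurable \<mu>" and \<rho>_nonneg: "\<And>x. 0 \<le> \<rho> x"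
    unfolding \<rho>_def by simp_all
  have dens: "density \<mu> (\<lambda>x. ennreal (\<rho> x)) = \<nu>"
    unfolding \<rho>_def using ac assms(3) by (intro density_real_RN_deriv) unfold_locales
  have "(\<integral>\<^sup>+x. ennreal (\<rho> x) \<partial>\<mu>) = 1"
    using \<nu>.emeasure_space_1 by (simp add: dens[symmetric] emeasure_density)
  then have \<rho>_int: "integrable \<mu> \<rho>" and \<rho>_integral: "(\<integral>x. \<rho> x \<partial>\<mu>) = 1"
    using \<rho>_nonneg by (auto intro: integrableI_nonneg simp: integral_eq_nn_integral)
  have exp_int: "integrable \<mu> (\<lambda>x. exp (g x))" and exp_integral: "(\<integral>x. exp (g x) \<partial>\<mu>) = 1"
    using exp_g by (auto intro: integrableI_nonneg simp: integral_eq_nn_integral)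
  have \<rho>g_int: "integrable \<mu> (\<lambda>x. \<rho> x * g x)" and g_integral: "(\<integral>x. g x \<partial>\<nu>) = (\<integral>x. \<rho> x * g x \<partial>\<mu>)"
    using g_int \<rho>_nonneg unfolding dens[symmetric]
    by (simp_all add: integrable_density integral_density)
  have Ent_eq: "Ent \<mu> \<nu> = (if integrable \<mu> (\<lambda>x. xlogx (\<rho> x)) then ereal (\<integral>x. xlogx (\<rho> x) \<partial>\<mu>) else \<infinity>)"
    unfolding \<rho>_def using \<mu>.finite_measure_axioms ac assms(3) by (rule Ent_absolutely_continuous)
  show ?thesis
  proof (cases "integrable \<mu> (\<lambda>x. xlogx (\<rho> x))")
    case True
    then have "(\<integral>x. g x \<partial>\<nu>) \<le> (\<integral>x. xlogx (\<rho> x) \<partial>\<mu>)"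
      using integral_mult_le_integral_xlogx[OF \<rho>_nonneg \<rho>_int True exp_int \<rho>g_int]
      by (simp add: g_integral \<rho>_integral exp_integral)
    then show ?thesis
      using True by (simp add: Ent_eq)
  qed (simp add: Ent_eq)
qed

lemma integral_le_Ent_plus_ln_nn_integral_exp:
  fixes g :: "'a \<Rightarrow> real"
  assumes "prob_space \<mu>" "prob_space \<nu>" "sets \<nu> = sets \<mu>"
    and [measurable]: "g \<in> borel_measurable \<mu>" and "integrable \<nu> g"
    and W: "(\<integral>\<^sup>+x. ennreal (exp (g x)) \<partial>\<mu>) = ennreal W" "0 < W"
  shows "ereal (\<integral>x. g x \<partial>\<nu>) \<le> Ent \<mu> \<nu> + ereal (ln W)"
proof -
  interpret \<nu>: prob_space \<nu> by fact
  have "(\<integral>\<^sup>+x. ennreal (exp (g x - ln W)) \<partial>\<mu>) = (\<integral>\<^sup>+x. ennreal (exp (g x)) * ennreal (1 / W) \<partial>\<mu>)"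
    using W by (intro nn_integral_cong) (simp add: exp_diff ennreal_mult[symmetric])
  also have "\<dots> = (\<integral>\<^sup>+x. ennreal (exp (g x)) \<partial>\<mu>) * ennreal (1 / W)"
    by (rule nn_integral_multc) measurable
  also have "\<dots> = 1"
    using W by (simp add: ennreal_mult[symmetric])
  finally have "ereal (\<integral>x. g x - ln W \<partial>\<nu>) \<le> Ent \<mu> \<nu>"
    using assms by (intro integral_le_Ent_if_nn_integral_exp_eq_1) auto
  then show ?thesis
    using \<open>integrable \<nu> g\<close> by (cases "Ent \<mu> \<nu>") (auto simp: \<nu>.prob_space)
qed

definition gibbs_measure :: "'a measure \<Rightarrow> real \<Rightarrow> ('a \<Rightarrow> ereal) \<Rightarrow> 'a measure" where
  "gibbs_measure m \<alpha> \<Phi> = density m (\<lambda>y. expneg \<alpha> (\<Phi> y) / (\<integral>\<^sup>+z. expneg \<alpha> (\<Phi> z) \<partial>m))"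

lemma prob_space_gibbs_measure:
  assumes [measurable]: "\<Phi> \<in> borel_measurable m"
    and "0 < (\<integral>\<^sup>+y. expneg \<alpha> (\<Phi> y) \<partial>m)" "(\<integral>\<^sup>+y. expneg \<alpha> (\<Phi> y) \<partial>m) < \<infinity>"
  shows "prob_space (gibbs_measure m \<alpha> \<Phi>)"
proof (rule prob_spaceI)
  have "emeasure (gibbs_measure m \<alpha> \<Phi>) (space (gibbs_measure m \<alpha> \<Phi>))
          = (\<integral>\<^sup>+y. expneg \<alpha> (\<Phi> y) \<partial>m) / (\<integral>\<^sup>+z. expneg \<alpha> (\<Phi> z) \<partial>m)"
    by (simp add: gibbs_measure_def emeasure_density nn_integral_divide)
  also have "\<dots> = 1"
    using assms(2,3) by (simp add: ennreal_divide_self less_top)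
  finally show "emeasure (gibbs_measure m \<alpha> \<Phi>) (space (gibbs_measure m \<alpha> \<Phi>)) = 1" .
qed

lemma nn_integral_exp_gibbs_measure:
  assumes [measurable]: "\<Phi> \<in> borel_measurable m" "f \<in> borel_measurable m"
    and "\<And>y. \<Phi> y \<noteq> -\<infinity>"
  shows "(\<integral>\<^sup>+y. ennreal (exp (\<alpha> * f y)) \<partial>gibbs_measure m \<alpha> \<Phi>)
           = (\<integral>\<^sup>+y. expneg \<alpha> (\<Phi> y - ereal (f y)) \<partial>m) / (\<integral>\<^sup>+z. expneg \<alpha> (\<Phi> z) \<partial>m)"
  using assms(3)
  by (simp add: gibbs_measure_def nn_integral_density nn_integral_divide expneg_minus_ereal
                ennreal_times_divide mult.commute)

lemma integral_le_Ent_gibbs_measure: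
  fixes f :: "'a \<Rightarrow> real"
  assumes "0 < \<alpha>" and \<Phi>_meas [measurable]: "\<Phi> \<in> borel_measurable m" and \<Phi>_fin: "\<And>y. \<Phi> y \<noteq> -\<infinity>"
    and "prob_space \<nu>" "sets \<nu> = sets m" "integrable \<nu> f"
    and Z: "(\<integral>\<^sup>+y. expneg \<alpha> (\<Phi> y) \<partial>m) = ennreal Z" "0 < Z"
    and W: "(\<integral>\<^sup>+y. expneg \<alpha> (\<Phi> y - ereal (f y)) \<partial>m) = ennreal W" "0 < W"
  shows "ereal (\<integral>y. f y \<partial>\<nu>) \<le> ereal (1 / \<alpha>) * Ent (gibbs_measure m \<alpha> \<Phi>) \<nu> + ereal (ln (W / Z) / \<alpha>)"
proof -
  have [measurable]: "f \<in> borel_measurable m"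
    using borel_measurable_integrable[OF \<open>integrable \<nu> f\<close>]
    by (simp add: measurable_cong_sets[OF \<open>sets \<nu> = sets m\<close> refl])
  have "ereal (\<integral>y. \<alpha> * f y \<partial>\<nu>) \<le> Ent (gibbs_measure m \<alpha> \<Phi>) \<nu> + ereal (ln (W / Z))"
  proof (rule integral_le_Ent_plus_ln_nn_integral_exp)
    show "prob_space (gibbs_measure m \<alpha> \<Phi>)"
      using Z by (intro prob_space_gibbs_measure) auto
    show "(\<integral>\<^sup>+y. ennreal (exp (\<alpha> * f y)) \<partial>gibbs_measure m \<alpha> \<Phi>) = ennreal (W / Z)"
      using Z W by (simp add: nn_integral_exp_gibbs_measure \<Phi>_fin divide_ennreal)
  qed (use assms in \<open>auto simp: gibbs_measure_def\<close>)
  then have scaled: "ereal (\<alpha> * (\<integral>y. f y \<partial>\<nu>)) \<le> Ent (gibbs_measure m \<alpha> \<Phi>) \<nu> + ereal (ln (W / Z))"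
    by simp
  show ?thesis
  proof (cases "Ent (gibbs_measure m \<alpha> \<Phi>) \<nu>")
    case (real e)
    then show ?thesis
      using scaled \<open>0 < \<alpha>\<close> by (simp add: field_simps)
  qed (use scaled \<open>0 < \<alpha>\<close> in auto)
qed

lemma ennpow_ennreal: "0 \<le> r \<Longrightarrow> ennpow (ennreal r) p = ennreal (r powr p)"
  by (simp add: ennpow_def)

lemma ennpow_pos: "0 < I \<Longrightarrow> 0 < ennpow I p"
  by (cases I rule: ennreal_cases) (auto simp: ennpow_def)

lemma BS_eq_top:
  assumes "\<And>i. 0 < (\<integral>\<^sup>+y. expneg (\<alpha> i) (V i y) \<partial>m i)"
    and "(\<integral>\<^sup>+y. expneg (\<alpha> j) (V j y) \<partial>m j) = \<infinity>"
  shows "BS \<alpha> m V = \<infinity>"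
  unfolding BS_def infinity_ennreal_def ennreal_prod_eq_top
proof (intro conjI ballI bexI)
  show "ennpow (\<integral>\<^sup>+y. expneg (\<alpha> i) (V i y) \<partial>m i) (1 / \<alpha> i) \<noteq> 0" for i
    using ennpow_pos[OF assms(1)] by (metis less_irrefl)
  show "ennpow (\<integral>\<^sup>+y. expneg (\<alpha> j) (V j y) \<partial>m j) (1 / \<alpha> j) = \<top>"
    using assms(2) by (simp add: ennpow_def)
qed auto

lemma BS_ennreal:
  assumes "\<And>i. (\<integral>\<^sup>+y. expneg (\<alpha> i) (V i y) \<partial>m i) = ennreal (W i)" "\<And>i. 0 \<le> W i"
  shows "BS \<alpha> m V = ennreal (\<Prod>i\<in>UNIV. W i powr (1 / \<alpha> i))"
  using assms by (simp add: BS_def ennpow_ennreal prod_ennreal)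

lemma nn_integral_expneg_less_top_if_BS_le:
  assumes "BS \<alpha> m V \<le> BS \<alpha> m \<Phi>"
    and "\<And>i. 0 < (\<integral>\<^sup>+y. expneg (\<alpha> i) (V i y) \<partial>m i)"
    and "\<And>i. (\<integral>\<^sup>+y. expneg (\<alpha> i) (\<Phi> i y) \<partial>m i) < \<infinity>"
  shows "(\<integral>\<^sup>+y. expneg (\<alpha> j) (V j y) \<partial>m j) < \<infinity>"
proof (rule ccontr)
  assume "\<not> ?thesis"
  then have "BS \<alpha> m V = \<infinity>"
    using assms(2) by (intro BS_eq_top[where j = j]) (auto simp: less_top[symmetric])
  moreover have "BS \<alpha> m \<Phi> < \<infinity>"
    using assms(3)
    by (subst BS_ennreal[where W = "\<lambda>i. enn2real (\<integral>\<^sup>+y. expneg (\<alpha> i) (\<Phi> i y) \<partial>m i)"])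
       (auto simp: less_top ennreal_enn2real_if)
  ultimately show False
    using assms(1) by (simp add: top_unique)
qed

lemma ln_prod_powr:
  fixes X :: "'i \<Rightarrow> real"
  assumes "finite I" "\<And>i. i \<in> I \<Longrightarrow> 0 < X i"
  shows "ln (\<Prod>i\<in>I. X i powr p i) = (\<Sum>i\<in>I. p i * ln (X i))"
proof -
  have "ln (\<Prod>i\<in>I. X i powr p i) = (\<Sum>i\<in>I. ln (X i powr p i))"
    using assms by (intro ln_prod) (auto simp: less_imp_neq[symmetric])
  then show ?thesis
    by (simp add: ln_powr)
qed

lemma sum_ln_ratio_nonpos_if_BS_le:
  fixes W Z :: "'i::finite \<Rightarrow> real"
  assumes "BS \<alpha> m V \<le> BS \<alpha> m \<Phi>"
    and "\<And>i. (\<integral>\<^sup>+y. expneg (\<alpha> i) (V i y) \<partial>m i) = ennreal (W i)" "\<And>i. 0 < W i"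
    and "\<And>i. (\<integral>\<^sup>+y. expneg (\<alpha> i) (\<Phi> i y) \<partial>m i) = ennreal (Z i)" "\<And>i. 0 < Z i"
  shows "(\<Sum>i\<in>UNIV. ln (W i / Z i) / \<alpha> i) \<le> 0"
proof -
  have "(\<Prod>i\<in>UNIV. W i powr (1 / \<alpha> i)) \<le> (\<Prod>i\<in>UNIV. Z i powr (1 / \<alpha> i))"
    using assms(1) BS_ennreal[where V = V and W = W] BS_ennreal[where V = \<Phi> and W = Z] assms(2-5)
    by (simp add: less_imp_le prod_nonneg)
  then have "ln (\<Prod>i\<in>UNIV. W i powr (1 / \<alpha> i)) \<le> ln (\<Prod>i\<in>UNIV. Z i powr (1 / \<alpha> i))"
    using assms(3,5) by (subst ln_le_cancel_iff) (auto intro!: prod_pos simp: less_imp_neq[symmetric])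
  then have "(\<Sum>i\<in>UNIV. 1 / \<alpha> i * ln (W i)) \<le> (\<Sum>i\<in>UNIV. 1 / \<alpha> i * ln (Z i))"
    using assms(3,5) by (simp add: ln_prod_powr)
  moreover have "ln (W i / Z i) = ln (W i) - ln (Z i)" for i
    using assms(3)[of i] assms(5)[of i] by (simp add: ln_div)
  ultimately show ?thesis
    by (simp add: diff_divide_distrib sum_subtractf)
qed

lemma admissible_minus_dual_feasible:
  assumes "admissible c \<Phi>" "dual_feasible (\<lambda>x. (\<Sum>i\<in>UNIV. \<Phi> i (x i)) - ereal (c x)) \<nu> f"
  shows "admissible c (\<lambda>i y. \<Phi> i y - ereal (f i y))"
  unfolding admissible_def
proof (intro conjI allI)
  fix i y
  show "\<Phi> i y - ereal (f i y) \<noteq> -\<infinity>"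
    using assms(1) by (cases "\<Phi> i y") (auto simp: admissible_def)
next
  fix x
  have "(\<Sum>i\<in>UNIV. \<Phi> i (x i) - ereal (f i (x i))) = (\<Sum>i\<in>UNIV. \<Phi> i (x i)) - ereal (\<Sum>i\<in>UNIV. f i (x i))"
    by (simp add: minus_ereal_def sum.distrib sum_negf)
  moreover have "ereal (\<Sum>i\<in>UNIV. f i (x i)) \<le> (\<Sum>i\<in>UNIV. \<Phi> i (x i)) - ereal (c x)"
    using assms(2) by (simp add: dual_feasible_def)
  ultimately show "ereal (c x) \<le> (\<Sum>i\<in>UNIV. \<Phi> i (x i) - ereal (f i (x i)))"
    by (cases "\<Sum>i\<in>UNIV. \<Phi> i (x i)") auto
qed

lemma sum_integral_le_sum_Ent_if_BS_le:
  fixes f :: "'i::finite \<Rightarrow> 'a::topological_space \<Rightarrow> real"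
  assumes alpha_pos: "\<And>i. 0 < \<alpha> i" and m_sets: "\<And>i. sets (m i) = sets borel"
    and \<Phi>_meas: "\<And>i. \<Phi> i \<in> borel_measurable borel" and \<Phi>_fin: "\<And>i y. \<Phi> i y \<noteq> -\<infinity>"
    and Z_pos: "\<And>i. 0 < (\<integral>\<^sup>+y. expneg (\<alpha> i) (\<Phi> i y) \<partial>m i)"
    and Z_fin: "\<And>i. (\<integral>\<^sup>+y. expneg (\<alpha> i) (\<Phi> i y) \<partial>m i) < \<infinity>"
    and \<nu>_prob: "\<And>i. prob_space (\<nu> i)" and \<nu>_sets: "\<And>i. sets (\<nu> i) = sets borel"
    and f_int: "\<And>i. integrable (\<nu> i) (f i)"
    and BS_le: "BS \<alpha> m (\<lambda>i y. \<Phi> i y - ereal (f i y)) \<le> BS \<alpha> m \<Phi>"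
  shows "(\<Sum>i\<in>UNIV. ereal (\<integral>y. f i y \<partial>\<nu> i))
           \<le> (\<Sum>i\<in>UNIV. ereal (1 / \<alpha> i) * Ent (gibbs_measure (m i) (\<alpha> i) (\<Phi> i)) (\<nu> i))"
proof -
  have [measurable]: "\<Phi> i \<in> borel_measurable (m i)" "f i \<in> borel_measurable (m i)" for i
    using \<Phi>_meas borel_measurable_integrable[OF f_int]
    by (simp_all add: measurable_cong_sets[OF m_sets refl] measurable_cong_sets[OF \<nu>_sets refl])
  define Z where "Z i = enn2real (\<integral>\<^sup>+y. expneg (\<alpha> i) (\<Phi> i y) \<partial>m i)" for i
  define W where "W i = enn2real (\<integral>\<^sup>+y. expneg (\<alpha> i) (\<Phi> i y - ereal (f i y)) \<partial>m i)" for i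
  have W_pos: "0 < (\<integral>\<^sup>+y. expneg (\<alpha> i) (\<Phi> i y - ereal (f i y)) \<partial>m i)" for i
    using Z_pos \<Phi>_fin by (intro nn_integral_expneg_minus_pos) auto
  have Z: "(\<integral>\<^sup>+y. expneg (\<alpha> i) (\<Phi> i y) \<partial>m i) = ennreal (Z i)" "0 < Z i" for i
    using Z_pos[of i] Z_fin[of i] by (auto simp: Z_def ennreal_enn2real_if enn2real_positive_iff less_top)
  have W: "(\<integral>\<^sup>+y. expneg (\<alpha> i) (\<Phi> i y - ereal (f i y)) \<partial>m i) = ennreal (W i)" "0 < W i" for i
    using W_pos[of i] nn_integral_expneg_less_top_if_BS_le[OF BS_le W_pos Z_fin, of i]
    by (auto simp: W_def ennreal_enn2real_if enn2real_positive_iff less_top)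
  have "(\<Sum>i\<in>UNIV. ereal (\<integral>y. f i y \<partial>\<nu> i))
          \<le> (\<Sum>i\<in>UNIV. ereal (1 / \<alpha> i) * Ent (gibbs_measure (m i) (\<alpha> i) (\<Phi> i)) (\<nu> i)
                              + ereal (ln (W i / Z i) / \<alpha> i))"
    using W
    by (intro sum_mono integral_le_Ent_gibbs_measure alpha_pos \<nu>_prob Z f_int \<Phi>_fin)
       (auto simp: \<nu>_sets m_sets)
  also have "\<dots> = (\<Sum>i\<in>UNIV. ereal (1 / \<alpha> i) * Ent (gibbs_measure (m i) (\<alpha> i) (\<Phi> i)) (\<nu> i))
                     + ereal (\<Sum>i\<in>UNIV. ln (W i / Z i) / \<alpha> i)"
    by (simp add: sum.distrib)
  also have "\<dots> \<le> (\<Sum>i\<in>UNIV. ereal (1 / \<alpha> i) * Ent (gibbs_measure (m i) (\<alpha> i) (\<Phi> i)) (\<nu> i))"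
    using sum_ln_ratio_nonpos_if_BS_le[OF BS_le W Z] by (intro add_decreasing2) (auto simp: zero_ereal_def)
  finally show ?thesis .
qed

theorem theorem2p3:
  fixes c :: "('i::finite \<Rightarrow> 'a::euclidean_space) \<Rightarrow> real"
    and \<alpha> :: "'i \<Rightarrow> real"
    and m :: "'i \<Rightarrow> 'a measure"
    and \<Phi> :: "'i \<Rightarrow> 'a \<Rightarrow> ereal"
    and \<nu> :: "'i \<Rightarrow> 'a measure"
  assumes c_meas: "c \<in> borel_measurable (PiM UNIV (\<lambda>_. borel))"
    and alpha_pos: "\<And>i. \<alpha> i > 0"
    and m_sets: "\<And>i. sets (m i) = sets borel"
    and Phi_meas: "\<And>i. \<Phi> i \<in> borel_measurable borel"
    and Phi_adm: "admissible c \<Phi>"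
    and Phi_max: "\<And>V. admissible c V \<Longrightarrow> BS \<alpha> m V \<le> BS \<alpha> m \<Phi>"
    and Z_pos: "\<And>i. 0 < (\<integral>\<^sup>+ y. expneg (\<alpha> i) (\<Phi> i y) \<partial>(m i))"
    and Z_fin: "\<And>i. (\<integral>\<^sup>+ y. expneg (\<alpha> i) (\<Phi> i y) \<partial>(m i)) < \<infinity>"
    and \<nu>_prob: "\<And>i. prob_space (\<nu> i)"
    and \<nu>_sets: "\<And>i. sets (\<nu> i) = sets borel"
    and primal_sol: "\<exists>\<pi>\<in>couplings \<nu>.
          (\<integral>\<^sup>+ x. e2ennreal ((\<Sum>i\<in>UNIV. \<Phi> i (x i)) - ereal (c x)) \<partial>\<pi>)
            = Kmin (\<lambda>x. (\<Sum>i\<in>UNIV. \<Phi> i (x i)) - ereal (c x)) \<nu>"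
    and dual_sol: "\<exists>f. dual_feasible (\<lambda>x. (\<Sum>i\<in>UNIV. \<Phi> i (x i)) - ereal (c x)) \<nu> f \<and>
          (\<forall>g. dual_feasible (\<lambda>x. (\<Sum>i\<in>UNIV. \<Phi> i (x i)) - ereal (c x)) \<nu> g
                 \<longrightarrow> dual_value \<nu> g \<le> dual_value \<nu> f) \<and>
          enn2ereal (Kmin (\<lambda>x. (\<Sum>i\<in>UNIV. \<Phi> i (x i)) - ereal (c x)) \<nu>)
            = ereal (dual_value \<nu> f)"
  shows "enn2ereal (Kmin (\<lambda>x. (\<Sum>i\<in>UNIV. \<Phi> i (x i)) - ereal (c x)) \<nu>)
    \<le> (\<Sum>i\<in>UNIV. ereal (1 / \<alpha> i) *
         Ent (density (m i) (\<lambda>y. expneg (\<alpha> i) (\<Phi> i y)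
                                / (\<integral>\<^sup>+ z. expneg (\<alpha> i) (\<Phi> i z) \<partial>(m i)))) (\<nu> i))"
proof -
  let ?d = "\<lambda>x. (\<Sum>i\<in>UNIV. \<Phi> i (x i)) - ereal (c x)"
  from dual_sol obtain f where f_feas: "dual_feasible ?d \<nu> f"
    and Kmin_eq: "enn2ereal (Kmin ?d \<nu>) = ereal (dual_value \<nu> f)"
    by blast
  have "enn2ereal (Kmin ?d \<nu>) = (\<Sum>i\<in>UNIV. ereal (\<integral>y. f i y \<partial>\<nu> i))"
    using Kmin_eq by (simp add: dual_value_def)
  also have "\<dots> \<le> (\<Sum>i\<in>UNIV. ereal (1 / \<alpha> i) * Ent (gibbs_measure (m i) (\<alpha> i) (\<Phi> i)) (\<nu> i))"
  proof (rule sum_integral_le_sum_Ent_if_BS_le)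
    show "BS \<alpha> m (\<lambda>i y. \<Phi> i y - ereal (f i y)) \<le> BS \<alpha> m \<Phi>"
      using Phi_max admissible_minus_dual_feasible[OF Phi_adm f_feas] .
    show "\<Phi> i y \<noteq> -\<infinity>" for i y
      using Phi_adm by (simp add: admissible_def)
    show "integrable (\<nu> i) (f i)" for i
      using f_feas by (simp add: dual_feasible_def)
  qed (use assms in auto)
  finally show ?thesis
    by (simp add: gibbs_measure_def)
qed

end
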